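(* Let $G=(V,E)$ be a finite connected graph with boundary $\partial G\subset V$, let $\alpha\in\Pi(\partial G)$, $p\in[0,1]$, $q>0$. Let $\widehat E\subset E$ be such that for every $e\in\widehat E$ there exists a cutset for $e$ contained in $E\setminus\widehat E$. Let $Q_{\widehat E}(e)$ be the collection of cutsets for $e$ contained in $E\setminus\widehat E$, and for $e\in\widehat E$ set \[\widehat\varepsilon_e:=|p'-p|\;\mathbb P^G_{\max(p,p')}\big(\exists\chi\in Q_{\widehat E}(e)\text{ such that all edges of }\chi\text{ are closed}\big).\] Then: (1) if $p<p'$, then $\mathbb P^G_{(p+\widehat\varepsilon_e\mathbf 1_{e\in\widehat E})_e}\preceq\phi^\alpha_{G,p,q}$; (2) if $p>p'$, then $\phi^\alpha_{G,p,q}\preceq\mathbb P^G_{(p-\widehat\varepsilon_e\mathbf 1_{e\in\widehat E})_e}$.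
   Context: Configurations are $\omega\in\{0,1\}^E$; an edge $e$ is open if $\omega(e)=1$, closed otherwise. $\Pi(\partial G)$ denotes the set of partitions of $\partial G$; vertices in the same block of $\alpha$ are called wired. $G\cup\alpha$ is the (multi)graph obtained from $G$ by identifying wired vertices. $k(\omega,\alpha)$ is the number of connected components of the graph with vertex set $V$ and edge set the open edges of $\omega$, after identifying wired vertices. The FK measure is $\phi^\alpha_{G,p,q}(\omega)=Z^{-1}\big(\prod_{e\in E}p^{\omega(e)}(1-p)^{1-\omega(e)}\big)q^{k(\omega,\alpha)}$. Set $p':=\frac{p}{p+q(1-p)}$. A cutset for an edge $e$ is a set $\chi\subset E\setminus\{e\}$ such that the endpoints of $e$ lie in different connected components of $G\cup\alpha$ with the edges of $\chi\cup\{e\}$ removed. $\mathbb P^G_{(p_e)}$ is the product measure on $\{0,1\}^E$ where edge $e$ is open independently with probability $p_e$ ($\mathbb P^G_s$ when $p_e\equiv s$). $\mu\preceq\mu'$ means $\mu(A)\le\mu'(A)$ for all increasing events $A$. *)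

theory Defs
  imports Complex_Main "HOL-Library.Disjoint_Sets"
begin

text \<open>A finite (multi)graph is given by a vertex set V, an edge set E of abstract edges,
and an endpoint map ends :: 'e => 'v * 'v. A configuration is represented by the set
of its open edges (a subset of E).\<close>

definition step_rel :: "('e \<Rightarrow> 'v \<times> 'v) \<Rightarrow> 'e set \<Rightarrow> 'v set set \<Rightarrow> ('v \<times> 'v) set" where
  "step_rel ends \<omega> \<alpha> = {ends e | e. e \<in> \<omega>} \<union> {(x, y). \<exists>B\<in>\<alpha>. x \<in> B \<and> y \<in> B}"

definition conn_rel :: "'v set \<Rightarrow> ('e \<Rightarrow> 'v \<times> 'v) \<Rightarrow> 'e set \<Rightarrow> 'v set set \<Rightarrow> ('v \<times> 'v) set" where
  "conn_rel V ends \<omega> \<alpha> =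
     Id_on V \<union> (step_rel ends \<omega> \<alpha> \<union> (step_rel ends \<omega> \<alpha>)\<inverse>)\<^sup>+"

definition num_clusters :: "'v set \<Rightarrow> ('e \<Rightarrow> 'v \<times> 'v) \<Rightarrow> 'e set \<Rightarrow> 'v set set \<Rightarrow> nat" where
  "num_clusters V ends \<omega> \<alpha> = card (V // conn_rel V ends \<omega> \<alpha>)"

definition finite_graph :: "'v set \<Rightarrow> 'e set \<Rightarrow> ('e \<Rightarrow> 'v \<times> 'v) \<Rightarrow> bool" where
  "finite_graph V E ends \<longleftrightarrow> finite V \<and> finite E \<and> (\<forall>e\<in>E. fst (ends e) \<in> V \<and> snd (ends e) \<in> V)"

definition connected_graph :: "'v set \<Rightarrow> 'e set \<Rightarrow> ('e \<Rightarrow> 'v \<times> 'v) \<Rightarrow> bool" where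
  "connected_graph V E ends \<longleftrightarrow> (\<forall>x\<in>V. \<forall>y\<in>V. (x, y) \<in> conn_rel V ends E {})"

definition fk_weight :: "'v set \<Rightarrow> 'e set \<Rightarrow> ('e \<Rightarrow> 'v \<times> 'v) \<Rightarrow> 'v set set \<Rightarrow> real \<Rightarrow> real \<Rightarrow> 'e set \<Rightarrow> real" where
  "fk_weight V E ends \<alpha> p q \<omega> = p ^ card \<omega> * (1 - p) ^ card (E - \<omega>) * q ^ num_clusters V ends \<omega> \<alpha>"

definition fk_measure :: "'v set \<Rightarrow> 'e set \<Rightarrow> ('e \<Rightarrow> 'v \<times> 'v) \<Rightarrow> 'v set set \<Rightarrow> real \<Rightarrow> real \<Rightarrow> 'e set set \<Rightarrow> real" where
  "fk_measure V E ends \<alpha> p q A =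
     (\<Sum>\<omega>\<in>A \<inter> Pow E. fk_weight V E ends \<alpha> p q \<omega>) / (\<Sum>\<omega>\<in>Pow E. fk_weight V E ends \<alpha> p q \<omega>)"

definition prod_measure :: "'e set \<Rightarrow> ('e \<Rightarrow> real) \<Rightarrow> 'e set set \<Rightarrow> real" where
  "prod_measure E pe A = (\<Sum>\<omega>\<in>A \<inter> Pow E. (\<Prod>e\<in>\<omega>. pe e) * (\<Prod>e\<in>E - \<omega>. 1 - pe e))"

definition increasing_event :: "'e set \<Rightarrow> 'e set set \<Rightarrow> bool" where
  "increasing_event E A \<longleftrightarrow> A \<subseteq> Pow E \<and> (\<forall>\<omega>\<in>A. \<forall>\<omega>'. \<omega> \<subseteq> \<omega>' \<and> \<omega>' \<subseteq> E \<longrightarrow> \<omega>' \<in> A)"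

definition stoch_dom :: "'e set \<Rightarrow> ('e set set \<Rightarrow> real) \<Rightarrow> ('e set set \<Rightarrow> real) \<Rightarrow> bool" where
  "stoch_dom E \<mu> \<mu>' \<longleftrightarrow> (\<forall>A. increasing_event E A \<longrightarrow> \<mu> A \<le> \<mu>' A)"

definition is_cutset :: "'v set \<Rightarrow> 'e set \<Rightarrow> ('e \<Rightarrow> 'v \<times> 'v) \<Rightarrow> 'v set set \<Rightarrow> 'e \<Rightarrow> 'e set \<Rightarrow> bool" where
  "is_cutset V E ends \<alpha> e \<chi> \<longleftrightarrow> \<chi> \<subseteq> E - {e} \<and>
     ends e \<notin> conn_rel V ends (E - (\<chi> \<union> {e})) \<alpha>"

definition p_prime :: "real \<Rightarrow> real \<Rightarrow> real" where
  "p_prime p q = p / (p + q * (1 - p))"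

end

(*
  Reveal the edges one at a time. Given the states of the edges revealed so far, the FK
  measure opens the next edge e with probability p if the endpoints of e are connected
  through the other open edges, and with probability p' otherwise, in particular whenever
  some cutset of e is closed. Reveal the edges of Ehat first. Conditioned on edges of Ehat,
  the FK measure is still dominated by the Bernoulli(max p p') measure, and the event that
  some cutset of e outside Ehat is closed is decreasing and ignores the edges of Ehat; so
  its conditional probability is at least its Bernoulli(max p p') probability. Hence e is
  open with conditional probability at least p + eps e if p < p', and at most p - eps e
  if p > p'. An induction over the edge set turns such conditional bounds into stochastic
  domination; lower bounds reduce to upper bounds by complementing configurations.
*)

theory Submission
  imports Defs
begin

section \<open>Cylinder sums and product measures\<close>

definition cyl_sum :: "'e set \<Rightarrow> 'e set \<Rightarrow> 'e set \<Rightarrow> ('e set \<Rightarrow> real) \<Rightarrow> real" where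
  "cyl_sum E S H w = (\<Sum>\<omega>\<in>Pow E. if \<omega> \<inter> S = H then w \<omega> else 0)"

lemma sum_Pow_remove:
  assumes "finite E" "f \<in> E"
  shows "(\<Sum>\<omega>\<in>Pow E. g \<omega>) = (\<Sum>\<omega>\<in>Pow (E - {f}). g (insert f \<omega>) + g \<omega>)"
proof -
  have Pow_E: "Pow E = Pow (E - {f}) \<union> insert f ` Pow (E - {f})"
    using Pow_insert[of f "E - {f}"] assms(2) by (simp add: insert_absorb)
  have "sum g (Pow E) = sum g (Pow (E - {f})) + sum g (insert f ` Pow (E - {f}))"
    unfolding Pow_E by (rule sum.union_disjoint) (use assms(1) in auto)
  also have "sum g (insert f ` Pow (E - {f})) = (\<Sum>\<omega>\<in>Pow (E - {f}). g (insert f \<omega>))"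
    by (rule sum.reindex_cong[where l = "insert f"]) (auto intro!: inj_onI)
  finally show ?thesis
    by (simp add: sum.distrib add.commute)
qed

lemma sum_Pow_event_remove:
  assumes "finite E" "f \<in> E"
  shows "(\<Sum>\<omega>\<in>A \<inter> Pow E. g \<omega>) =
    (\<Sum>\<omega>\<in>{\<omega>. insert f \<omega> \<in> A} \<inter> Pow (E - {f}). g (insert f \<omega>)) + (\<Sum>\<omega>\<in>A \<inter> Pow (E - {f}). g \<omega>)"
proof -
  have "(\<Sum>\<omega>\<in>A \<inter> Pow E. g \<omega>) = (\<Sum>\<omega>\<in>Pow E. if \<omega> \<in> A then g \<omega> else 0)"
    using assms(1) sum.inter_restrict[of "Pow E" g A] by (simp add: Int_commute)
  also have "\<dots> = (\<Sum>\<omega>\<in>Pow (E - {f}). if insert f \<omega> \<in> A then g (insert f \<omega>) else 0)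
      + (\<Sum>\<omega>\<in>Pow (E - {f}). if \<omega> \<in> A then g \<omega> else 0)"
    by (simp add: sum_Pow_remove[OF assms] sum.distrib)
  finally show ?thesis
    using assms(1) sum.inter_restrict[of "Pow (E - {f})" g A]
      sum.inter_restrict[of "Pow (E - {f})" "\<lambda>\<omega>. g (insert f \<omega>)" "{\<omega>. insert f \<omega> \<in> A}"]
    by (simp add: Int_commute)
qed

lemma cyl_sum_remove_free:
  assumes "finite E" "f \<in> E" "f \<notin> S"
  shows "cyl_sum E S H g = cyl_sum (E - {f}) S H (\<lambda>\<omega>. g (insert f \<omega>) + g \<omega>)"
  unfolding cyl_sum_def sum_Pow_remove[OF assms(1,2)] using assms(3) by (intro sum.cong) auto

lemma cyl_sum_insert_open:
  assumes "finite E" "f \<in> E" "f \<notin> S" "H \<subseteq> S"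
  shows "cyl_sum E (insert f S) (insert f H) g = cyl_sum (E - {f}) S H (\<lambda>\<omega>. g (insert f \<omega>))"
  unfolding cyl_sum_def sum_Pow_remove[OF assms(1,2)] using assms(3,4) by (intro sum.cong) auto

lemma cyl_sum_insert_closed:
  assumes "finite E" "f \<in> E" "f \<notin> S" "H \<subseteq> S"
  shows "cyl_sum E (insert f S) H g = cyl_sum (E - {f}) S H g"
  unfolding cyl_sum_def sum_Pow_remove[OF assms(1,2)] using assms(3,4) by (intro sum.cong) auto

lemma cyl_sum_insert_split:
  assumes "finite E" "f \<in> E" "f \<notin> S" "H \<subseteq> S"
  shows "cyl_sum E S H g = cyl_sum E (insert f S) (insert f H) g + cyl_sum E (insert f S) H g"
  unfolding cyl_sum_remove_free[OF assms(1-3)] cyl_sum_insert_open[OF assms] cyl_sum_insert_closed[OF assms]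
  by (simp add: cyl_sum_def sum.distrib[symmetric] if_distrib cong: if_cong)

lemma cyl_sum_mono:
  "(\<And>\<omega>. \<omega> \<subseteq> E \<Longrightarrow> \<omega> \<inter> S = H \<Longrightarrow> g \<omega> \<le> h \<omega>) \<Longrightarrow> cyl_sum E S H g \<le> cyl_sum E S H h"
  unfolding cyl_sum_def by (intro sum_mono) auto

lemma cyl_sum_cong:
  "(\<And>\<omega>. \<omega> \<subseteq> E \<Longrightarrow> \<omega> \<inter> S = H \<Longrightarrow> g \<omega> = h \<omega>) \<Longrightarrow> cyl_sum E S H g = cyl_sum E S H h"
  unfolding cyl_sum_def by (intro sum.cong) auto

lemma cyl_sum_nonneg: "(\<And>\<omega>. 0 \<le> g \<omega>) \<Longrightarrow> 0 \<le> cyl_sum E S H g"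
  unfolding cyl_sum_def by (intro sum_nonneg) auto

lemma cyl_sum_add: "cyl_sum E S H (\<lambda>\<omega>. g \<omega> + h \<omega>) = cyl_sum E S H g + cyl_sum E S H h"
  unfolding cyl_sum_def sum.distrib[symmetric] by (intro sum.cong) auto

lemma cyl_sum_cmult: "cyl_sum E S H (\<lambda>\<omega>. c * g \<omega>) = c * cyl_sum E S H g"
  unfolding cyl_sum_def sum_distrib_left by (intro sum.cong) auto

lemma cyl_sum_indicator:
  assumes "finite E"
  shows "cyl_sum E S H (\<lambda>\<omega>. if \<omega> \<in> A then g \<omega> else 0) = (\<Sum>\<omega>\<in>A \<inter> Pow E. if \<omega> \<inter> S = H then g \<omega> else 0)"
  using assms sum.inter_restrict[of "Pow E" "\<lambda>\<omega>. if \<omega> \<inter> S = H then g \<omega> else 0" A]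
  unfolding cyl_sum_def by (simp add: Int_commute) (intro sum.cong, auto)

lemma cyl_sum_flip:
  assumes "S \<subseteq> E" "H \<subseteq> S"
  shows "cyl_sum E S H (\<lambda>\<omega>. g (E - \<omega>)) = cyl_sum E S (S - H) g"
proof -
  have "bij_betw (\<lambda>\<omega>. E - \<omega>) (Pow E) (Pow E)"
    by (rule bij_betw_byWitness[where f' = "\<lambda>\<omega>. E - \<omega>"]) auto
  moreover have "(E - \<omega>) \<inter> S = H \<longleftrightarrow> \<omega> \<inter> S = S - H" if "\<omega> \<subseteq> E" for \<omega>
    using assms that by blast
  ultimately show ?thesis
    unfolding cyl_sum_def
    by (subst sum.reindex_bij_betw[symmetric, where h = "\<lambda>\<omega>. E - \<omega>"]) (auto intro!: sum.cong simp: Diff_Diff_Int Int_absorb1)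
qed

lemma prod_measure_Int_Pow [simp]: "prod_measure E r (A \<inter> Pow E) = prod_measure E r A"
  by (simp add: prod_measure_def Int_assoc)

lemma prod_measure_remove:
  assumes "finite E" "f \<in> E"
  shows "prod_measure E r A = r f * prod_measure (E - {f}) r {\<omega>. insert f \<omega> \<in> A}
    + (1 - r f) * prod_measure (E - {f}) r A"
proof -
  let ?P = "\<lambda>\<omega>. (\<Prod>e\<in>\<omega>. r e) * (\<Prod>e\<in>E - {f} - \<omega>. 1 - r e)"
  have "(\<Prod>e\<in>insert f \<omega>. r e) * (\<Prod>e\<in>E - insert f \<omega>. 1 - r e) = r f * ?P \<omega>"
    and "(\<Prod>e\<in>\<omega>. r e) * (\<Prod>e\<in>E - \<omega>. 1 - r e) = (1 - r f) * ?P \<omega>"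
    if "\<omega> \<subseteq> E - {f}" for \<omega>
  proof -
    have "finite \<omega>" "f \<notin> \<omega>" "E - insert f \<omega> = E - {f} - \<omega>" "E - \<omega> = insert f (E - {f} - \<omega>)"
      using that assms finite_subset by auto
    then show "(\<Prod>e\<in>insert f \<omega>. r e) * (\<Prod>e\<in>E - insert f \<omega>. 1 - r e) = r f * ?P \<omega>"
      and "(\<Prod>e\<in>\<omega>. r e) * (\<Prod>e\<in>E - \<omega>. 1 - r e) = (1 - r f) * ?P \<omega>"
      using assms(1) by simp_all
  qed
  then show ?thesis
    unfolding prod_measure_def sum_Pow_event_remove[OF assms] sum_distrib_left
    by (intro arg_cong2[where f = "(+)"] sum.cong) auto
qed

lemma prod_measure_nonneg:
  assumes "\<forall>e\<in>E. 0 \<le> r e \<and> r e \<le> 1"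
  shows "0 \<le> prod_measure E r A"
  unfolding prod_measure_def using assms by (intro sum_nonneg mult_nonneg_nonneg prod_nonneg) auto

lemma prod_measure_mono:
  assumes "finite E" "\<forall>e\<in>E. 0 \<le> r e \<and> r e \<le> 1" "A \<inter> Pow E \<subseteq> A'"
  shows "prod_measure E r A \<le> prod_measure E r A'"
  unfolding prod_measure_def using assms by (intro sum_mono2 mult_nonneg_nonneg prod_nonneg) auto

lemma prod_measure_Pow: "finite E \<Longrightarrow> prod_measure E r (Pow E) = 1"
  using prod_add[of E r "\<lambda>e. 1 - r e"] by (simp add: prod_measure_def)

lemma prod_measure_Diff:
  assumes "finite E"
  shows "prod_measure E r (Pow E - A) = 1 - prod_measure E r A"
proof -
  have "(Pow E - A) \<inter> Pow E = Pow E - A \<inter> Pow E"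
    by blast
  then show ?thesis
    using prod_measure_Pow[OF assms, of r] assms unfolding prod_measure_def by (simp add: sum_diff)
qed

lemma prod_measure_le_1:
  assumes "finite E" "\<forall>e\<in>E. 0 \<le> r e \<and> r e \<le> 1"
  shows "prod_measure E r A \<le> 1"
  using prod_measure_mono[OF assms, of A "Pow E"] prod_measure_Pow[OF assms(1)] by simp

lemma sum_Pow_flip:
  "(\<Sum>\<omega>\<in>{\<omega>. E - \<omega> \<in> X} \<inter> Pow E. g (E - \<omega>)) = (\<Sum>\<omega>\<in>X \<inter> Pow E. g \<omega>)"
proof (rule sum.reindex_bij_betw[where h = "\<lambda>\<omega>. E - \<omega>"])
  have "E - (E - \<omega>) = \<omega>" if "\<omega> \<subseteq> E" for \<omega>
    using that by blast
  then show "bij_betw (\<lambda>\<omega>. E - \<omega>) ({\<omega>. E - \<omega> \<in> X} \<inter> Pow E) (X \<inter> Pow E)"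
    by (intro bij_betw_byWitness[where f' = "\<lambda>\<omega>. E - \<omega>"]) auto
qed

lemma prod_measure_flip:
  "prod_measure E (\<lambda>e. 1 - r e) A = prod_measure E r {\<omega>. E - \<omega> \<in> A}"
proof -
  have "E - (E - \<omega>) = \<omega>" if "\<omega> \<subseteq> E" for \<omega>
    using that by blast
  then show ?thesis
    unfolding prod_measure_def
      sum_Pow_flip[where X = A and g = "\<lambda>\<omega>. (\<Prod>e\<in>\<omega>. 1 - r e) * (\<Prod>e\<in>E - \<omega>. 1 - (1 - r e))", symmetric]
    by (intro sum.cong) (auto simp: mult.commute)
qed

lemma increasing_eventD:
  "increasing_event E A \<Longrightarrow> \<omega> \<in> A \<Longrightarrow> \<omega> \<subseteq> \<omega>' \<Longrightarrow> \<omega>' \<subseteq> E \<Longrightarrow> \<omega>' \<in> A"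
  unfolding increasing_event_def by blast

lemma increasing_event_restrict:
  "increasing_event E A \<Longrightarrow> increasing_event (E - {f}) (A \<inter> Pow (E - {f}))"
  unfolding increasing_event_def by blast

lemma increasing_event_insert:
  assumes "increasing_event E A" "f \<in> E"
  shows "increasing_event (E - {f}) ({\<omega>. insert f \<omega> \<in> A} \<inter> Pow (E - {f}))"
  unfolding increasing_event_def
  using increasing_eventD[OF assms(1), of "insert f _" "insert f _"] assms(2) by blast

lemma increasing_event_flip:
  assumes "increasing_event E A"
  shows "increasing_event E {\<omega>. \<omega> \<subseteq> E \<and> E - \<omega> \<notin> A}"
  unfolding increasing_event_def
  using increasing_eventD[OF assms, of "E - _" "E - _"] by blast

definition depends_only_on :: "'e set \<Rightarrow> 'e set \<Rightarrow> 'e set set \<Rightarrow> bool" where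
  "depends_only_on E T A \<longleftrightarrow> (\<forall>f\<in>E - T. \<forall>\<omega>. \<omega> \<subseteq> E - {f} \<longrightarrow> (insert f \<omega> \<in> A \<longleftrightarrow> \<omega> \<in> A))"

lemma depends_only_on_restrict:
  "depends_only_on E T A \<Longrightarrow> depends_only_on (E - {f}) T (A \<inter> Pow (E - {f}))"
  unfolding depends_only_on_def by auto

lemma depends_only_on_flip:
  assumes "depends_only_on E T A"
  shows "depends_only_on E T {\<omega>. \<omega> \<subseteq> E \<and> E - \<omega> \<notin> A}"
  unfolding depends_only_on_def
proof (intro ballI allI impI)
  fix f \<omega> assume f: "f \<in> E - T" and \<omega>: "\<omega> \<subseteq> E - {f}"
  have "E - \<omega> = insert f (E - insert f \<omega>)"
    using f \<omega> by auto
  moreover have "insert f (E - insert f \<omega>) \<in> A \<longleftrightarrow> E - insert f \<omega> \<in> A"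
    using assms f unfolding depends_only_on_def by blast
  ultimately show "insert f \<omega> \<in> {\<omega>. \<omega> \<subseteq> E \<and> E - \<omega> \<notin> A} \<longleftrightarrow> \<omega> \<in> {\<omega>. \<omega> \<subseteq> E \<and> E - \<omega> \<notin> A}"
    using f \<omega> by auto
qed

section \<open>Domination from bounds on conditional probabilities\<close>

(* cyl_sum E (insert f S) (insert f H) w / cyl_sum E S H w is the w-probability that f is
   open given that H is the set of open edges in S. For f in B the bound is only required
   when S is contained in B: the domination proof reveals the edges of B first. *)
definition open_prob_le :: "'e set \<Rightarrow> 'e set \<Rightarrow> 'e set \<Rightarrow> ('e set \<Rightarrow> real) \<Rightarrow> ('e \<Rightarrow> real) \<Rightarrow> bool" where
  "open_prob_le E B T w r \<longleftrightarrow> (\<forall>f\<in>E \<inter> T. \<forall>S H. S \<subseteq> E - {f} \<longrightarrow> H \<subseteq> S \<longrightarrow> (f \<in> B \<longrightarrow> S \<subseteq> B) \<longrightarrow>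
     cyl_sum E (insert f S) (insert f H) w \<le> r f * cyl_sum E S H w)"

definition open_prob_ge :: "'e set \<Rightarrow> 'e set \<Rightarrow> 'e set \<Rightarrow> ('e set \<Rightarrow> real) \<Rightarrow> ('e \<Rightarrow> real) \<Rightarrow> bool" where
  "open_prob_ge E B T w r \<longleftrightarrow> (\<forall>f\<in>E \<inter> T. \<forall>S H. S \<subseteq> E - {f} \<longrightarrow> H \<subseteq> S \<longrightarrow> (f \<in> B \<longrightarrow> S \<subseteq> B) \<longrightarrow>
     r f * cyl_sum E S H w \<le> cyl_sum E (insert f S) (insert f H) w)"

lemma open_prob_leD:
  "open_prob_le E B T w r \<Longrightarrow> f \<in> E \<Longrightarrow> f \<in> T \<Longrightarrow> S \<subseteq> E - {f} \<Longrightarrow> H \<subseteq> S \<Longrightarrow> (f \<in> B \<Longrightarrow> S \<subseteq> B) \<Longrightarrow>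
    cyl_sum E (insert f S) (insert f H) w \<le> r f * cyl_sum E S H w"
  unfolding open_prob_le_def by blast

lemma open_prob_le_remove:
  assumes "finite E" "f \<in> E" "open_prob_le E B T w r"
  shows "open_prob_le (E - {f}) B T (\<lambda>\<omega>. w (insert f \<omega>) + w \<omega>) r"
  unfolding open_prob_le_def
proof (intro ballI allI impI)
  fix g S H assume g: "g \<in> (E - {f}) \<inter> T" and S: "S \<subseteq> E - {f} - {g}" and "H \<subseteq> S" "g \<in> B \<longrightarrow> S \<subseteq> B"
  then have "cyl_sum E (insert g S) (insert g H) w \<le> r g * cyl_sum E S H w"
    by (intro open_prob_leD[OF assms(3)]) auto
  moreover have "f \<notin> insert g S" "f \<notin> S"
    using g S by auto
  ultimately show "cyl_sum (E - {f}) (insert g S) (insert g H) (\<lambda>\<omega>. w (insert f \<omega>) + w \<omega>)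
      \<le> r g * cyl_sum (E - {f}) S H (\<lambda>\<omega>. w (insert f \<omega>) + w \<omega>)"
    by (simp add: cyl_sum_remove_free[OF assms(1,2), symmetric])
qed

lemma open_prob_le_fix_open:
  assumes "finite E" "f \<in> E" "B \<inter> E \<noteq> {} \<Longrightarrow> f \<in> B" "open_prob_le E B T w r"
  shows "open_prob_le (E - {f}) B T (\<lambda>\<omega>. w (insert f \<omega>)) r"
  unfolding open_prob_le_def
proof (intro ballI allI impI)
  fix g S H assume g: "g \<in> (E - {f}) \<inter> T" and S: "S \<subseteq> E - {f} - {g}" and H: "H \<subseteq> S"
    and "g \<in> B \<longrightarrow> S \<subseteq> B"
  then have "cyl_sum E (insert g (insert f S)) (insert g (insert f H)) w
      \<le> r g * cyl_sum E (insert f S) (insert f H) w"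
    using assms(2,3) by (intro open_prob_leD[OF assms(4)]) auto
  moreover have "f \<notin> insert g S" "insert g H \<subseteq> insert g S" "f \<notin> S"
    using g S H by auto
  ultimately show "cyl_sum (E - {f}) (insert g S) (insert g H) (\<lambda>\<omega>. w (insert f \<omega>))
      \<le> r g * cyl_sum (E - {f}) S H (\<lambda>\<omega>. w (insert f \<omega>))"
    using H by (simp add: cyl_sum_insert_open[OF assms(1,2), symmetric] insert_commute)
qed

lemma open_prob_le_fix_closed:
  assumes "finite E" "f \<in> E" "B \<inter> E \<noteq> {} \<Longrightarrow> f \<in> B" "open_prob_le E B T w r"
  shows "open_prob_le (E - {f}) B T w r"
  unfolding open_prob_le_def
proof (intro ballI allI impI)
  fix g S H assume g: "g \<in> (E - {f}) \<inter> T" and S: "S \<subseteq> E - {f} - {g}" and H: "H \<subseteq> S"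
    and "g \<in> B \<longrightarrow> S \<subseteq> B"
  then have "cyl_sum E (insert g (insert f S)) (insert g H) w \<le> r g * cyl_sum E (insert f S) H w"
    using assms(2,3) by (intro open_prob_leD[OF assms(4)]) auto
  moreover have "f \<notin> insert g S" "insert g H \<subseteq> insert g S" "f \<notin> S"
    using g S H by auto
  ultimately show "cyl_sum (E - {f}) (insert g S) (insert g H) w \<le> r g * cyl_sum (E - {f}) S H w"
    using H by (simp add: cyl_sum_insert_closed[OF assms(1,2), symmetric] insert_commute)
qed

lemma sum_le_prod_measure_mult_remove:
  assumes "finite E" "f \<in> E" "A \<inter> Pow (E - {f}) = {\<omega>. insert f \<omega> \<in> A} \<inter> Pow (E - {f})"
    and "(\<Sum>\<omega>\<in>A \<inter> Pow (E - {f}). w (insert f \<omega>) + w \<omega>)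
      \<le> prod_measure (E - {f}) r A * (\<Sum>\<omega>\<in>Pow (E - {f}). w (insert f \<omega>) + w \<omega>)"
  shows "(\<Sum>\<omega>\<in>A \<inter> Pow E. w \<omega>) \<le> prod_measure E r A * (\<Sum>\<omega>\<in>Pow E. w \<omega>)"
proof -
  have "(\<Sum>\<omega>\<in>A \<inter> Pow E. w \<omega>) = (\<Sum>\<omega>\<in>A \<inter> Pow (E - {f}). w (insert f \<omega>) + w \<omega>)"
    unfolding sum_Pow_event_remove[OF assms(1,2)] assms(3)[symmetric] by (simp add: sum.distrib)
  moreover have "prod_measure (E - {f}) r {\<omega>. insert f \<omega> \<in> A} = prod_measure (E - {f}) r A"
    by (metis assms(3) prod_measure_Int_Pow)
  then have "prod_measure E r A = prod_measure (E - {f}) r A"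
    unfolding prod_measure_remove[OF assms(1,2), of r A] by (simp add: algebra_simps)
  ultimately show ?thesis
    using assms(4) sum_Pow_remove[OF assms(1,2), of w] by simp
qed

lemma sum_le_prod_measure_mult_condition:
  assumes "finite E" "f \<in> E" "\<forall>e\<in>E. 0 \<le> r e \<and> r e \<le> 1" "increasing_event E A"
    and "cyl_sum E {f} {f} w \<le> r f * cyl_sum E {} {} w"
    and "(\<Sum>\<omega>\<in>{\<omega>. insert f \<omega> \<in> A} \<inter> Pow (E - {f}). w (insert f \<omega>))
      \<le> prod_measure (E - {f}) r {\<omega>. insert f \<omega> \<in> A} * (\<Sum>\<omega>\<in>Pow (E - {f}). w (insert f \<omega>))"
    and "(\<Sum>\<omega>\<in>A \<inter> Pow (E - {f}). w \<omega>) \<le> prod_measure (E - {f}) r A * (\<Sum>\<omega>\<in>Pow (E - {f}). w \<omega>)"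
  shows "(\<Sum>\<omega>\<in>A \<inter> Pow E. w \<omega>) \<le> prod_measure E r A * (\<Sum>\<omega>\<in>Pow E. w \<omega>)"
proof -
  define a b where "a = prod_measure (E - {f}) r {\<omega>. insert f \<omega> \<in> A}" and "b = prod_measure (E - {f}) r A"
  define W1 W0 where "W1 = (\<Sum>\<omega>\<in>Pow (E - {f}). w (insert f \<omega>))" and "W0 = (\<Sum>\<omega>\<in>Pow (E - {f}). w \<omega>)"
  have "b \<le> a"
    unfolding a_def b_def using assms(1-3)
    by (intro prod_measure_mono) (auto intro: increasing_eventD[OF assms(4), of _ "insert f _"])
  moreover have "cyl_sum E {f} {f} w = W1" "cyl_sum E {} {} w = W1 + W0"
    using cyl_sum_insert_open[OF assms(1,2), of "{}" "{}" w]
    by (simp_all add: W1_def W0_def cyl_sum_def sum_Pow_remove[OF assms(1,2)] sum.distrib)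
  \<comment> \<open>Opening \<open>f\<close> makes \<open>A\<close> likelier (\<open>b \<le> a\<close>) and \<open>w\<close> opens \<open>f\<close> less often than \<open>r\<close> does.\<close>
  ultimately have "0 \<le> (a - b) * (r f * (W1 + W0) - W1)"
    using assms(5) by simp
  then have "a * W1 + b * W0 \<le> (r f * a + (1 - r f) * b) * (W1 + W0)"
    by (simp add: algebra_simps)
  then show ?thesis
    using assms(6,7) unfolding sum_Pow_event_remove[OF assms(1,2)] prod_measure_remove[OF assms(1,2)]
      sum_Pow_remove[OF assms(1,2)] sum.distrib a_def b_def W1_def W0_def
    by simp
qed

lemma sum_le_prod_measure_mult:
  assumes "finite E" "\<And>\<omega>. 0 \<le> w \<omega>" "\<forall>e\<in>E. 0 \<le> r e \<and> r e \<le> 1" "open_prob_le E B T w r"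
    "increasing_event E A" "depends_only_on E T A"
  shows "(\<Sum>\<omega>\<in>A \<inter> Pow E. w \<omega>) \<le> prod_measure E r A * (\<Sum>\<omega>\<in>Pow E. w \<omega>)"
  using assms
proof (induction E arbitrary: w A rule: finite_psubset_induct)
  case (psubset E)
  note fin = psubset.hyps(1) and bounds = psubset.prems(2) and cond = psubset.prems(3)
    and incr = psubset.prems(4) and dep = psubset.prems(5)
  have IH: "(\<Sum>\<omega>\<in>X \<inter> Pow (E - {f}). v \<omega>) \<le> prod_measure (E - {f}) r X * (\<Sum>\<omega>\<in>Pow (E - {f}). v \<omega>)"
    if "f \<in> E" "\<And>\<omega>. 0 \<le> v \<omega>" "open_prob_le (E - {f}) B T v r"
      "increasing_event (E - {f}) (X \<inter> Pow (E - {f}))" "depends_only_on (E - {f}) T (X \<inter> Pow (E - {f}))"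
    for f v X
  proof -
    have "(\<Sum>\<omega>\<in>X \<inter> Pow (E - {f}) \<inter> Pow (E - {f}). v \<omega>)
        \<le> prod_measure (E - {f}) r (X \<inter> Pow (E - {f})) * (\<Sum>\<omega>\<in>Pow (E - {f}). v \<omega>)"
      using that bounds by (intro psubset.IH) auto
    then show ?thesis
      by (simp add: Int_assoc)
  qed
  \<comment> \<open>Sum out an edge the event ignores; otherwise condition on an edge, from \<open>B\<close> as long as possible.\<close>
  consider "E = {}" | f where "f \<in> E" "f \<notin> T" | f where "f \<in> E" "E \<subseteq> T" "B \<inter> E \<noteq> {} \<Longrightarrow> f \<in> B"
    by blast
  then show ?case
  proof cases
    case 1
    then show ?thesis
      by (cases "{} \<in> A") (auto simp: prod_measure_def)
  next
    case (2 f)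
    have A_f: "A \<inter> Pow (E - {f}) = {\<omega>. insert f \<omega> \<in> A} \<inter> Pow (E - {f})"
      using dep 2 unfolding depends_only_on_def by auto
    have "open_prob_le (E - {f}) B T (\<lambda>\<omega>. w (insert f \<omega>) + w \<omega>) r"
      using fin 2(1) cond by (rule open_prob_le_remove)
    then show ?thesis
      using 2 psubset.prems
      by (intro sum_le_prod_measure_mult_remove[OF fin 2(1) A_f] IH)
        (auto intro: add_nonneg_nonneg increasing_event_restrict depends_only_on_restrict)
  next
    case (3 f)
    have "depends_only_on (E - {f}) T X" for X
      using 3(2) by (auto simp: depends_only_on_def)
    moreover have "open_prob_le (E - {f}) B T (\<lambda>\<omega>. w (insert f \<omega>)) r"
      using fin 3(1,3) cond by (rule open_prob_le_fix_open)
    moreover have "open_prob_le (E - {f}) B T w r"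
      using fin 3(1,3) cond by (rule open_prob_le_fix_closed)
    moreover have "cyl_sum E {f} {f} w \<le> r f * cyl_sum E {} {} w"
      using open_prob_leD[OF cond, of f "{}" "{}"] 3 by auto
    ultimately show ?thesis
      using 3 psubset.prems
      by (intro sum_le_prod_measure_mult_condition[OF fin 3(1) bounds incr] IH)
        (auto intro: increasing_event_insert increasing_event_restrict)
  qed
qed

lemma open_prob_le_pointwise:
  assumes "finite E" "\<And>f \<omega>. f \<in> E \<Longrightarrow> f \<in> T \<Longrightarrow> \<omega> \<subseteq> E - {f} \<Longrightarrow> w (insert f \<omega>) \<le> r f * (w (insert f \<omega>) + w \<omega>)"
  shows "open_prob_le E B T w r"
  unfolding open_prob_le_def
proof (intro ballI allI impI)
  fix f S H assume f: "f \<in> E \<inter> T" and S: "S \<subseteq> E - {f}" and "H \<subseteq> S"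
  then have "f \<notin> S" "f \<in> E"
    by auto
  have "cyl_sum (E - {f}) S H (\<lambda>\<omega>. w (insert f \<omega>)) \<le> cyl_sum (E - {f}) S H (\<lambda>\<omega>. r f * (w (insert f \<omega>) + w \<omega>))"
    using assms(2) f by (intro cyl_sum_mono) auto
  then show "cyl_sum E (insert f S) (insert f H) w \<le> r f * cyl_sum E S H w"
    unfolding cyl_sum_insert_open[OF assms(1) \<open>f \<in> E\<close> \<open>f \<notin> S\<close> \<open>H \<subseteq> S\<close>]
      cyl_sum_remove_free[OF assms(1) \<open>f \<in> E\<close> \<open>f \<notin> S\<close>] cyl_sum_cmult .
qed

lemma open_prob_le_flip:
  assumes "finite E" "open_prob_ge E B T w r"
  shows "open_prob_le E B T (\<lambda>\<omega>. w (E - \<omega>)) (\<lambda>e. 1 - r e)"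
  unfolding open_prob_le_def
proof (intro ballI allI impI)
  fix f S H assume f: "f \<in> E \<inter> T" and S: "S \<subseteq> E - {f}" and H: "H \<subseteq> S" and "f \<in> B \<longrightarrow> S \<subseteq> B"
  then have "r f * cyl_sum E S (S - H) w \<le> cyl_sum E (insert f S) (insert f (S - H)) w"
    using assms(2) unfolding open_prob_ge_def by blast
  moreover have "cyl_sum E S (S - H) w = cyl_sum E (insert f S) (insert f (S - H)) w + cyl_sum E (insert f S) (S - H) w"
    using S f assms(1) by (intro cyl_sum_insert_split) auto
  moreover have "cyl_sum E (insert f S) (insert f H) (\<lambda>\<omega>. w (E - \<omega>)) = cyl_sum E (insert f S) (S - H) w"
  proof -
    have "S - insert f H = S - H"
      using S by auto
    then show ?thesis
      using cyl_sum_flip[of "insert f S" E "insert f H" w] S H f by auto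
  qed
  moreover have "cyl_sum E S H (\<lambda>\<omega>. w (E - \<omega>)) = cyl_sum E S (S - H) w"
    using S H by (intro cyl_sum_flip) auto
  ultimately show "cyl_sum E (insert f S) (insert f H) (\<lambda>\<omega>. w (E - \<omega>)) \<le> (1 - r f) * cyl_sum E S H (\<lambda>\<omega>. w (E - \<omega>))"
    by (simp add: left_diff_distrib)
qed

(* Complementing configurations exchanges open and closed edges, which turns the lower
   bound into the upper bound of sum_le_prod_measure_mult for the flipped weight. *)
lemma prod_measure_mult_le_sum:
  assumes "finite E" "\<And>\<omega>. 0 \<le> w \<omega>" "\<forall>e\<in>E. 0 \<le> r e \<and> r e \<le> 1" "open_prob_ge E B T w r"
    "increasing_event E A" "depends_only_on E T A"
  shows "prod_measure E r A * (\<Sum>\<omega>\<in>Pow E. w \<omega>) \<le> (\<Sum>\<omega>\<in>A \<inter> Pow E. w \<omega>)"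
proof -
  define A' where "A' = {\<omega>. \<omega> \<subseteq> E \<and> E - \<omega> \<notin> A}"
  have A': "A' \<inter> Pow E = {\<omega>. E - \<omega> \<in> Pow E - A} \<inter> Pow E"
    unfolding A'_def by auto
  have "(\<Sum>\<omega>\<in>A' \<inter> Pow E. w (E - \<omega>)) \<le> prod_measure E (\<lambda>e. 1 - r e) A' * (\<Sum>\<omega>\<in>Pow E. w (E - \<omega>))"
    unfolding A'_def using assms
    by (intro sum_le_prod_measure_mult open_prob_le_flip increasing_event_flip depends_only_on_flip) auto
  moreover have "(\<Sum>\<omega>\<in>A' \<inter> Pow E. w (E - \<omega>)) = (\<Sum>\<omega>\<in>Pow E. w \<omega>) - (\<Sum>\<omega>\<in>A \<inter> Pow E. w \<omega>)"
  proof -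
    have "(Pow E - A) \<inter> Pow E = Pow E - A \<inter> Pow E"
      by blast
    then show ?thesis
      unfolding A' sum_Pow_flip using assms(1) by (simp add: sum_diff)
  qed
  moreover have "(\<Sum>\<omega>\<in>Pow E. w (E - \<omega>)) = (\<Sum>\<omega>\<in>Pow E. w \<omega>)"
    using sum_Pow_flip[where E = E and X = "Pow E" and g = w] by (simp add: Int_absorb)
  moreover have "prod_measure E (\<lambda>e. 1 - r e) A' = 1 - prod_measure E r A"
  proof -
    have "{\<omega>. E - \<omega> \<in> A'} \<inter> Pow E = Pow E - A"
      unfolding A'_def by (auto simp: Diff_Diff_Int Int_absorb1)
    then show ?thesis
      using prod_measure_Int_Pow[of E r "{\<omega>. E - \<omega> \<in> A'}"] prod_measure_Diff[OF assms(1)]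
      by (simp add: prod_measure_flip)
  qed
  ultimately show ?thesis
    by (simp add: algebra_simps)
qed

section \<open>Connectivity in the wired graph\<close>

definition merge_classes :: "('a \<times> 'a) set \<Rightarrow> 'a \<Rightarrow> 'a \<Rightarrow> ('a \<times> 'a) set" where
  "merge_classes R x y = R \<union> (R``{x} \<union> R``{y}) \<times> (R``{x} \<union> R``{y})"

lemma trans_Un_square:
  assumes "trans R" "sym R" "R `` C \<subseteq> C"
  shows "trans (R \<union> C \<times> C)"
  using assms unfolding trans_def sym_def by blast

lemma equiv_merge_classes:
  assumes "equiv V R" "x \<in> V" "y \<in> V"
  shows "equiv V (merge_classes R x y)"
  unfolding merge_classes_def
proof (rule equivI)
  have "R `` (R``{x} \<union> R``{y}) \<subseteq> R``{x} \<union> R``{y}"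
    using assms(1) by (auto elim!: equivE dest: transD)
  then show "trans (R \<union> (R``{x} \<union> R``{y}) \<times> (R``{x} \<union> R``{y}))"
    using assms(1) by (intro trans_Un_square) (auto elim: equivE)
qed (use assms in \<open>auto simp: equiv_def refl_on_def sym_def\<close>)

lemma equiv_class_square_subset: "equiv V R \<Longrightarrow> R``{x} \<times> R``{x} \<subseteq> R"
  by (auto elim!: equivE dest: symD transD)

lemma merge_classes_related:
  assumes "equiv V R" "(x, y) \<in> R"
  shows "merge_classes R x y = R"
  using equiv_class_square_subset[OF assms(1), of x] equiv_class_eq[OF assms] unfolding merge_classes_def by auto

lemma quotient_merge_classes:
  assumes R: "equiv V R" and "x \<in> V"
  shows "V // merge_classes R x y = insert (R``{x} \<union> R``{y}) (V // R - {R``{x}, R``{y}})"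
proof -
  define X Y where "X = R``{x}" and "Y = R``{y}"
  have class_cases: "R``{v} = X \<or> R``{v} = Y" if "v \<in> X \<union> Y" for v
    using that equiv_class_eq[OF R] unfolding X_def Y_def by blast
  have self: "v \<in> R``{v}" if "v \<in> V" for v
    using equiv_class_self[OF R that] .
  have Image: "merge_classes R x y``{v} = (if v \<in> X \<union> Y then X \<union> Y else R``{v})" for v
    using class_cases unfolding merge_classes_def X_def[symmetric] Y_def[symmetric] by auto
  have "V // merge_classes R x y = insert (X \<union> Y) (V // R - {X, Y})"
  proof (intro equalityI subsetI)
    fix K assume "K \<in> V // merge_classes R x y"
    then obtain v where "v \<in> V" "K = merge_classes R x y``{v}"
      by (auto elim: quotientE)
    show "K \<in> insert (X \<union> Y) (V // R - {X, Y})"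
    proof (cases "v \<in> X \<union> Y")
      case False
      then have "K = R``{v}" "R``{v} \<noteq> X" "R``{v} \<noteq> Y"
        using \<open>K = _\<close> Image[of v] self[OF \<open>v \<in> V\<close>] by auto
      then show ?thesis
        using quotientI[OF \<open>v \<in> V\<close>, of R] by blast
    qed (use \<open>K = _\<close> Image in auto)
  next
    fix K assume K: "K \<in> insert (X \<union> Y) (V // R - {X, Y})"
    show "K \<in> V // merge_classes R x y"
    proof (cases "K = X \<union> Y")
      case True
      have "x \<in> X \<union> Y"
        using self[OF \<open>x \<in> V\<close>] unfolding X_def by auto
      then show ?thesis
        using True Image[of x] quotientI[OF \<open>x \<in> V\<close>, of "merge_classes R x y"] by auto
    next
      case False
      then obtain v where "v \<in> V" "K = R``{v}" "K \<noteq> X" "K \<noteq> Y"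
        using K by (auto elim: quotientE)
      then have "K = merge_classes R x y``{v}"
        using class_cases[of v] Image[of v] by auto
      then show ?thesis
        using quotientI[OF \<open>v \<in> V\<close>, of "merge_classes R x y"] by simp
    qed
  qed
  then show ?thesis
    unfolding X_def Y_def .
qed

lemma card_quotient_merge_classes:
  assumes R: "equiv V R" and "finite V" "x \<in> V" "y \<in> V" "(x, y) \<notin> R"
  shows "card (V // merge_classes R x y) + 1 = card (V // R)"
proof -
  define X Y where "X = R``{x}" and "Y = R``{y}"
  have self: "v \<in> R``{v}" if "v \<in> V" for v
    using equiv_class_self[OF R that] .
  have XY: "X \<in> V // R" "Y \<in> V // R" "X \<noteq> Y"
    using assms eq_equiv_class_iff[OF R] unfolding X_def Y_def by (auto intro: quotientI)
  have "X \<union> Y \<notin> V // R"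
  proof
    assume "X \<union> Y \<in> V // R"
    then obtain v where "v \<in> V" "X \<union> Y = R``{v}"
      by (auto elim: quotientE)
    then have "R``{v} = X"
      using self[OF \<open>x \<in> V\<close>] equiv_class_eq[OF R, of v x] unfolding X_def by auto
    then have "y \<in> X"
      using \<open>X \<union> Y = R``{v}\<close> self[OF \<open>y \<in> V\<close>] unfolding Y_def by auto
    then show False
      using assms(5) unfolding X_def by auto
  qed
  moreover have fin: "finite (V // R)"
    using finite_quotient[OF assms(2) equiv_type[OF R]] .
  moreover have "card {X, Y} \<le> card (V // R)"
    using XY fin by (intro card_mono) auto
  ultimately show ?thesis
    using XY quotient_merge_classes[OF R \<open>x \<in> V\<close>, of y] unfolding X_def[symmetric] Y_def[symmetric]
    by (simp add: card_Diff_subset card_insert_disjoint)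
qed

lemma conn_rel_mono:
  assumes "\<omega> \<subseteq> \<omega>'"
  shows "conn_rel V ends \<omega> \<alpha> \<subseteq> conn_rel V ends \<omega>' \<alpha>"
proof -
  have "step_rel ends \<omega> \<alpha> \<subseteq> step_rel ends \<omega>' \<alpha>"
    using assms unfolding step_rel_def by blast
  then show ?thesis
    unfolding conn_rel_def by (intro Un_mono subset_refl trancl_mono_subset converse_mono[THEN iffD2])
qed

locale wired_graph =
  fixes V :: "'v set" and E :: "'e set" and ends :: "'e \<Rightarrow> 'v \<times> 'v" and \<alpha> :: "'v set set"
  assumes finite_graph: "finite_graph V E ends" and wired_subset: "\<Union>\<alpha> \<subseteq> V"
begin

lemma finite_V: "finite V" and finite_E: "finite E"
  using finite_graph unfolding finite_graph_def by auto

lemma ends_in_V: "e \<in> E \<Longrightarrow> ends e = (x, y) \<Longrightarrow> x \<in> V \<and> y \<in> V"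
  using finite_graph unfolding finite_graph_def by (metis fst_conv snd_conv)

lemma step_rel_subset:
  assumes "\<omega> \<subseteq> E"
  shows "step_rel ends \<omega> \<alpha> \<subseteq> V \<times> V"
proof -
  have "ends e \<in> V \<times> V" if "e \<in> E" for e
    using ends_in_V[OF that] by (cases "ends e") auto
  then show ?thesis
    using assms wired_subset unfolding step_rel_def by blast
qed

lemma equiv_conn_rel:
  assumes "\<omega> \<subseteq> E"
  shows "equiv V (conn_rel V ends \<omega> \<alpha>)"
proof -
  let ?G = "step_rel ends \<omega> \<alpha> \<union> (step_rel ends \<omega> \<alpha>)\<inverse>"
  have "?G \<subseteq> V \<times> V"
    using step_rel_subset[OF assms] by blast
  then have "?G\<^sup>+ \<subseteq> V \<times> V"
    by (rule trancl_subset_Sigma)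
  moreover have "sym (?G\<^sup>+)"
    by (intro sym_trancl) (auto simp: sym_def)
  moreover have "trans (Id_on V \<union> ?G\<^sup>+)"
    unfolding trans_def by (auto intro: trancl_trans)
  ultimately show ?thesis
    unfolding conn_rel_def by (intro equivI) (auto simp: refl_on_def sym_def)
qed

lemma conn_rel_insert_subset:
  assumes "e \<in> E" "\<omega> \<subseteq> E" "ends e = (x, y)"
  shows "conn_rel V ends (insert e \<omega>) \<alpha> \<subseteq> merge_classes (conn_rel V ends \<omega> \<alpha>) x y"
proof -
  let ?R = "conn_rel V ends \<omega> \<alpha>" and ?G = "\<lambda>\<omega>. step_rel ends \<omega> \<alpha> \<union> (step_rel ends \<omega> \<alpha>)\<inverse>"
  have R: "equiv V ?R"
    using assms(2) by (rule equiv_conn_rel)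
  have xy: "x \<in> V" "y \<in> V"
    using ends_in_V assms(1,3) by auto
  have M: "equiv V (merge_classes ?R x y)"
    using R xy by (rule equiv_merge_classes)
  have "{ends e' | e'. e' \<in> insert e \<omega>} = insert (ends e) {ends e' | e'. e' \<in> \<omega>}"
    by blast
  then have "?G (insert e \<omega>) = insert (x, y) (insert (y, x) (?G \<omega>))"
    unfolding step_rel_def assms(3) by auto
  moreover have "?G \<omega> \<subseteq> merge_classes ?R x y"
    unfolding merge_classes_def conn_rel_def by auto
  moreover have "(x, y) \<in> merge_classes ?R x y" "(y, x) \<in> merge_classes ?R x y"
    using equiv_class_self[OF R] xy unfolding merge_classes_def by auto
  ultimately have "?G (insert e \<omega>) \<subseteq> merge_classes ?R x y"
    by auto
  moreover have "trans (merge_classes ?R x y)"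
    using M by (auto elim: equivE)
  ultimately have "(?G (insert e \<omega>))\<^sup>+ \<subseteq> merge_classes ?R x y"
    using trancl_mono_subset[of "?G (insert e \<omega>)" "merge_classes ?R x y"] by simp
  moreover have "Id_on V \<subseteq> merge_classes ?R x y"
    using M by (auto elim!: equivE simp: refl_on_def)
  ultimately show ?thesis
    unfolding conn_rel_def[of V ends "insert e \<omega>"] by blast
qed

lemma merge_classes_subset_conn_rel_insert:
  assumes "e \<in> E" "\<omega> \<subseteq> E" "ends e = (x, y)"
  shows "merge_classes (conn_rel V ends \<omega> \<alpha>) x y \<subseteq> conn_rel V ends (insert e \<omega>) \<alpha>"
proof -
  let ?R = "conn_rel V ends \<omega> \<alpha>" and ?R' = "conn_rel V ends (insert e \<omega>) \<alpha>"
  have R': "equiv V ?R'"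
    using assms by (intro equiv_conn_rel) auto
  have "?R \<subseteq> ?R'"
    by (rule conn_rel_mono) auto
  have "(x, y) \<in> step_rel ends (insert e \<omega>) \<alpha>"
    unfolding step_rel_def by (intro UnI1 CollectI exI[of _ e]) (use assms(3) in auto)
  then have "(x, y) \<in> ?R'"
    unfolding conn_rel_def by (intro UnI2 r_into_trancl UnI1)
  then have "?R``{x} \<union> ?R``{y} \<subseteq> ?R'``{x}"
    using Image_mono[OF \<open>?R \<subseteq> ?R'\<close>] equiv_class_eq[OF R'] by (metis Un_least subset_refl)
  then have "(?R``{x} \<union> ?R``{y}) \<times> (?R``{x} \<union> ?R``{y}) \<subseteq> ?R'"
    using equiv_class_square_subset[OF R', of x] by (meson Sigma_mono subset_trans)
  with \<open>?R \<subseteq> ?R'\<close> show ?thesis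
    unfolding merge_classes_def by (rule Un_least)
qed

lemma conn_rel_insert:
  "e \<in> E \<Longrightarrow> \<omega> \<subseteq> E \<Longrightarrow> ends e = (x, y) \<Longrightarrow>
    conn_rel V ends (insert e \<omega>) \<alpha> = merge_classes (conn_rel V ends \<omega> \<alpha>) x y"
  by (intro equalityI conn_rel_insert_subset merge_classes_subset_conn_rel_insert)

lemma num_clusters_insert:
  assumes "e \<in> E" "\<omega> \<subseteq> E"
  shows "num_clusters V ends (insert e \<omega>) \<alpha> + (if ends e \<in> conn_rel V ends \<omega> \<alpha> then 0 else 1)
    = num_clusters V ends \<omega> \<alpha>"
proof -
  obtain x y where xy: "ends e = (x, y)"
    by fastforce
  note R = equiv_conn_rel[OF assms(2)] and V = ends_in_V[OF assms(1) xy]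
  show ?thesis
  proof (cases "(x, y) \<in> conn_rel V ends \<omega> \<alpha>")
    case True
    then show ?thesis
      using conn_rel_insert[OF assms xy] merge_classes_related[OF R True] xy by (simp add: num_clusters_def)
  next
    case False
    then show ?thesis
      using conn_rel_insert[OF assms xy] card_quotient_merge_classes[OF R finite_V V[THEN conjunct1] V[THEN conjunct2] False] xy
      by (simp add: num_clusters_def)
  qed
qed

definition closed_cutset :: "'e set \<Rightarrow> 'e \<Rightarrow> 'e set \<Rightarrow> bool" where
  "closed_cutset F e \<omega> \<longleftrightarrow> (\<exists>\<chi>. is_cutset V E ends \<alpha> e \<chi> \<and> \<chi> \<subseteq> F \<and> \<chi> \<inter> \<omega> = {})"

lemma closed_cutset_antimono: "\<omega> \<subseteq> \<omega>' \<Longrightarrow> closed_cutset F e \<omega>' \<Longrightarrow> closed_cutset F e \<omega>"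
  unfolding closed_cutset_def by blast

lemma closed_cutset_insert: "f \<notin> F \<Longrightarrow> closed_cutset F e (insert f \<omega>) \<longleftrightarrow> closed_cutset F e \<omega>"
  unfolding closed_cutset_def by blast

lemma increasing_event_no_closed_cutset: "increasing_event E {\<omega>. \<omega> \<subseteq> E \<and> \<not> closed_cutset F e \<omega>}"
  unfolding increasing_event_def using closed_cutset_antimono by blast

lemma depends_only_on_no_closed_cutset:
  assumes "S \<inter> F = {}"
  shows "depends_only_on E (E - S) {\<omega>. \<omega> \<subseteq> E \<and> \<not> closed_cutset F e \<omega>}"
  unfolding depends_only_on_def
proof (intro ballI allI impI)
  fix f \<omega> assume "f \<in> E - (E - S)" "\<omega> \<subseteq> E - {f}"
  moreover from this have "f \<notin> F"
    using assms by auto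
  ultimately show "insert f \<omega> \<in> {\<omega>. \<omega> \<subseteq> E \<and> \<not> closed_cutset F e \<omega>} \<longleftrightarrow> \<omega> \<in> {\<omega>. \<omega> \<subseteq> E \<and> \<not> closed_cutset F e \<omega>}"
    using closed_cutset_insert[of f F e \<omega>] by auto
qed

lemma closed_cutset_separates:
  assumes "\<omega> \<subseteq> E" "closed_cutset F e \<omega>"
  shows "ends e \<notin> conn_rel V ends (\<omega> - {e}) \<alpha>"
proof -
  obtain \<chi> where "is_cutset V E ends \<alpha> e \<chi>" "\<chi> \<inter> \<omega> = {}"
    using assms(2) unfolding closed_cutset_def by blast
  moreover have "\<omega> - {e} \<subseteq> E - (\<chi> \<union> {e})"
    using assms(1) \<open>\<chi> \<inter> \<omega> = {}\<close> by blast
  ultimately show ?thesis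
    unfolding is_cutset_def using conn_rel_mono by blast
qed

end

section \<open>The FK measure\<close>

locale fk_model = wired_graph V E ends \<alpha>
  for V :: "'v set" and E :: "'e set" and ends :: "'e \<Rightarrow> 'v \<times> 'v" and \<alpha> :: "'v set set" +
  fixes p q :: real
  assumes p_pos: "0 < p" and p_less_1: "p < 1" and q_pos: "0 < q"
begin

abbreviation W :: "'e set \<Rightarrow> real" where
  "W \<equiv> fk_weight V E ends \<alpha> p q"

abbreviation p' :: real where
  "p' \<equiv> p_prime p q"

lemma fk_weight_pos: "0 < W \<omega>"
  unfolding fk_weight_def using p_pos p_less_1 q_pos by simp

lemma p_prime_denominator_pos: "0 < p + q * (1 - p)"
  using p_pos p_less_1 q_pos by (simp add: add_pos_nonneg)

lemma p_prime_bounds: "0 < p'" "p' < 1"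
  using p_prime_denominator_pos p_pos p_less_1 q_pos by (simp_all add: p_prime_def)

lemma fk_weight_insert:
  assumes "e \<in> E" "\<omega> \<subseteq> E - {e}"
  shows "W (insert e \<omega>) = (if ends e \<in> conn_rel V ends \<omega> \<alpha> then p else p') * (W (insert e \<omega>) + W \<omega>)"
proof -
  define d :: nat where "d = (if ends e \<in> conn_rel V ends \<omega> \<alpha> then 0 else 1)"
  define c where "c = p ^ card \<omega> * (1 - p) ^ card (E - insert e \<omega>) * q ^ num_clusters V ends (insert e \<omega>) \<alpha>"
  have "finite \<omega>" "e \<notin> \<omega>"
    using assms finite_E finite_subset by auto
  then have "card (insert e \<omega>) = Suc (card \<omega>)"
    by simp
  then have W1: "W (insert e \<omega>) = p * c"
    unfolding fk_weight_def c_def by simp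
  have "E - \<omega> = insert e (E - insert e \<omega>)"
    using assms by auto
  then have "card (E - \<omega>) = Suc (card (E - insert e \<omega>))"
    using finite_E by (metis card_insert_disjoint finite_Diff insert_iff Diff_iff)
  moreover have "num_clusters V ends \<omega> \<alpha> = num_clusters V ends (insert e \<omega>) \<alpha> + d"
    using num_clusters_insert[OF assms(1)] assms(2) unfolding d_def by (metis Diff_subset add_0_right subset_trans)
  ultimately have W0: "W \<omega> = (1 - p) * q ^ d * c"
    unfolding fk_weight_def c_def by (simp add: power_add ac_simps)
  show ?thesis
  proof (cases "ends e \<in> conn_rel V ends \<omega> \<alpha>")
    case True
    then show ?thesis
      unfolding W1 W0 d_def by (simp add: algebra_simps)
  next
    case False
    have "p * c + (1 - p) * q * c = (p + q * (1 - p)) * c"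
      by (simp add: algebra_simps)
    then show ?thesis
      using False p_prime_denominator_pos unfolding W1 W0 d_def p_prime_def by simp
  qed
qed

lemma cyl_sum_fk_open:
  assumes "e \<in> E" "e \<notin> S" "H \<subseteq> S"
  shows "cyl_sum E (insert e S) (insert e H) W = p * cyl_sum E S H W
    + (p' - p) * cyl_sum E S H (\<lambda>\<omega>. if ends e \<in> conn_rel V ends (\<omega> - {e}) \<alpha> then 0 else W \<omega>)"
proof -
  define sep where "sep \<omega> = (if ends e \<in> conn_rel V ends (\<omega> - {e}) \<alpha> then 0 else W \<omega>)" for \<omega>
  have "W (insert e \<omega>) = p * (W (insert e \<omega>) + W \<omega>) + (p' - p) * (sep (insert e \<omega>) + sep \<omega>)"
    if "\<omega> \<subseteq> E - {e}" for \<omega>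
  proof -
    have "insert e \<omega> - {e} = \<omega>" "\<omega> - {e} = \<omega>"
      using that by auto
    then show ?thesis
      using fk_weight_insert[OF assms(1) that] unfolding sep_def
      by (cases "ends e \<in> conn_rel V ends \<omega> \<alpha>") (simp_all add: algebra_simps)
  qed
  then have "cyl_sum (E - {e}) S H (\<lambda>\<omega>. W (insert e \<omega>)) = cyl_sum (E - {e}) S H
      (\<lambda>\<omega>. p * (W (insert e \<omega>) + W \<omega>) + (p' - p) * (sep (insert e \<omega>) + sep \<omega>))"
    by (intro cyl_sum_cong) auto
  then show ?thesis
    unfolding sep_def[symmetric] cyl_sum_insert_open[OF finite_E assms]
      cyl_sum_remove_free[OF finite_E assms(1,2)]
    by (simp only: cyl_sum_add cyl_sum_cmult)
qed

lemma fk_cyl_sum_le_prod_measure: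
  assumes "S \<subseteq> E" "increasing_event E A" "depends_only_on E (E - S) A"
  shows "cyl_sum E S H (\<lambda>\<omega>. if \<omega> \<in> A then W \<omega> else 0) \<le> prod_measure E (\<lambda>_. max p p') A * cyl_sum E S H W"
proof -
  let ?w = "\<lambda>\<omega>. if \<omega> \<inter> S = H then W \<omega> else 0"
  have "open_prob_le E {} (E - S) ?w (\<lambda>_. max p p')"
  proof (rule open_prob_le_pointwise[OF finite_E])
    fix f \<omega> assume f: "f \<in> E" "f \<in> E - S" and \<omega>: "\<omega> \<subseteq> E - {f}"
    have "(if ends f \<in> conn_rel V ends \<omega> \<alpha> then p else p') * (W (insert f \<omega>) + W \<omega>)
        \<le> max p p' * (W (insert f \<omega>) + W \<omega>)"
      using fk_weight_pos[of \<omega>] fk_weight_pos[of "insert f \<omega>"] by (intro mult_right_mono) auto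
    then have "W (insert f \<omega>) \<le> max p p' * (W (insert f \<omega>) + W \<omega>)"
      using fk_weight_insert[OF f(1) \<omega>] by simp
    moreover have "insert f \<omega> \<inter> S = \<omega> \<inter> S"
      using f by auto
    ultimately show "?w (insert f \<omega>) \<le> max p p' * (?w (insert f \<omega>) + ?w \<omega>)"
      by simp
  qed
  then have "(\<Sum>\<omega>\<in>A \<inter> Pow E. ?w \<omega>) \<le> prod_measure E (\<lambda>_. max p p') A * (\<Sum>\<omega>\<in>Pow E. ?w \<omega>)"
    using assms(2,3) p_pos p_less_1 p_prime_bounds fk_weight_pos
    by (intro sum_le_prod_measure_mult[OF finite_E]) (auto simp: less_imp_le)
  then show ?thesis
    unfolding cyl_sum_indicator[OF finite_E] by (simp add: cyl_sum_def)
qed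

definition closed_cutset_prob :: "'e set \<Rightarrow> 'e \<Rightarrow> real" where
  "closed_cutset_prob F e = prod_measure E (\<lambda>_. max p p') {\<omega>. \<omega> \<subseteq> E \<and> closed_cutset F e \<omega>}"

lemma closed_cutset_prob_bounds: "0 \<le> closed_cutset_prob F e" "closed_cutset_prob F e \<le> 1"
proof -
  have "\<forall>e\<in>E. 0 \<le> max p p' \<and> max p p' \<le> 1"
    using p_pos p_less_1 p_prime_bounds by auto
  then show "0 \<le> closed_cutset_prob F e" "closed_cutset_prob F e \<le> 1"
    unfolding closed_cutset_prob_def by (simp_all add: prod_measure_nonneg prod_measure_le_1[OF finite_E])
qed

(* Conditioned on the edges of S, the FK measure is dominated by the Bernoulli(max p p')
   measure, and the event that no cutset inside F is closed is increasing and ignores S. *)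
lemma closed_cutset_prob_le:
  assumes "S \<subseteq> E" "S \<inter> F = {}"
  shows "closed_cutset_prob F e * cyl_sum E S H W
    \<le> cyl_sum E S H (\<lambda>\<omega>. if ends e \<in> conn_rel V ends (\<omega> - {e}) \<alpha> then 0 else W \<omega>)"
proof -
  let ?A = "{\<omega>. \<omega> \<subseteq> E \<and> \<not> closed_cutset F e \<omega>}"
  have "cyl_sum E S H (\<lambda>\<omega>. if \<omega> \<in> ?A then W \<omega> else 0) \<le> prod_measure E (\<lambda>_. max p p') ?A * cyl_sum E S H W"
    using assms by (intro fk_cyl_sum_le_prod_measure increasing_event_no_closed_cutset depends_only_on_no_closed_cutset)
  moreover have "cyl_sum E S H W = cyl_sum E S H (\<lambda>\<omega>. if closed_cutset F e \<omega> then W \<omega> else 0)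
      + cyl_sum E S H (\<lambda>\<omega>. if \<omega> \<in> ?A then W \<omega> else 0)"
    unfolding cyl_sum_add[symmetric] by (intro cyl_sum_cong) auto
  moreover have "Pow E - ?A = {\<omega>. \<omega> \<subseteq> E \<and> closed_cutset F e \<omega>}"
    by auto
  then have "prod_measure E (\<lambda>_. max p p') ?A = 1 - closed_cutset_prob F e"
    using prod_measure_Diff[OF finite_E, of "\<lambda>_. max p p'" ?A] unfolding closed_cutset_prob_def by simp
  moreover have "cyl_sum E S H (\<lambda>\<omega>. if closed_cutset F e \<omega> then W \<omega> else 0)
      \<le> cyl_sum E S H (\<lambda>\<omega>. if ends e \<in> conn_rel V ends (\<omega> - {e}) \<alpha> then 0 else W \<omega>)"
    using closed_cutset_separates fk_weight_pos by (intro cyl_sum_mono) (auto simp: less_imp_le)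
  ultimately show ?thesis
    by (simp add: algebra_simps)
qed

lemma open_prob_ge_fk:
  assumes "p < p'"
  shows "open_prob_ge E B UNIV W (\<lambda>e. p + (if e \<in> B then (p' - p) * closed_cutset_prob (E - B) e else 0))"
  unfolding open_prob_ge_def
proof (intro ballI allI impI)
  fix f S H assume f: "f \<in> E \<inter> UNIV" and S: "S \<subseteq> E - {f}" and H: "H \<subseteq> S" and B: "f \<in> B \<longrightarrow> S \<subseteq> B"
  define N where "N = cyl_sum E S H (\<lambda>\<omega>. if ends f \<in> conn_rel V ends (\<omega> - {f}) \<alpha> then 0 else W \<omega>)"
  have "(if f \<in> B then closed_cutset_prob (E - B) f * cyl_sum E S H W else 0) \<le> N"
    using closed_cutset_prob_le[of S "E - B" f H] B S fk_weight_pos unfolding N_def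
    by (auto intro!: cyl_sum_nonneg simp: less_imp_le)
  then have "(p' - p) * (if f \<in> B then closed_cutset_prob (E - B) f * cyl_sum E S H W else 0) \<le> (p' - p) * N"
    using assms by (intro mult_left_mono) auto
  moreover have "cyl_sum E (insert f S) (insert f H) W = p * cyl_sum E S H W + (p' - p) * N"
    unfolding N_def using f S H by (intro cyl_sum_fk_open) auto
  ultimately show "(p + (if f \<in> B then (p' - p) * closed_cutset_prob (E - B) f else 0)) * cyl_sum E S H W
      \<le> cyl_sum E (insert f S) (insert f H) W"
    by (simp add: algebra_simps split: if_splits)
qed

lemma open_prob_le_fk:
  assumes "p' < p"
  shows "open_prob_le E B UNIV W (\<lambda>e. p - (if e \<in> B then (p - p') * closed_cutset_prob (E - B) e else 0))"
  unfolding open_prob_le_def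
proof (intro ballI allI impI)
  fix f S H assume f: "f \<in> E \<inter> UNIV" and S: "S \<subseteq> E - {f}" and H: "H \<subseteq> S" and B: "f \<in> B \<longrightarrow> S \<subseteq> B"
  define N where "N = cyl_sum E S H (\<lambda>\<omega>. if ends f \<in> conn_rel V ends (\<omega> - {f}) \<alpha> then 0 else W \<omega>)"
  have "(if f \<in> B then closed_cutset_prob (E - B) f * cyl_sum E S H W else 0) \<le> N"
    using closed_cutset_prob_le[of S "E - B" f H] B S fk_weight_pos unfolding N_def
    by (auto intro!: cyl_sum_nonneg simp: less_imp_le)
  then have "(p - p') * (if f \<in> B then closed_cutset_prob (E - B) f * cyl_sum E S H W else 0) \<le> (p - p') * N"
    using assms by (intro mult_left_mono) auto
  moreover have "cyl_sum E (insert f S) (insert f H) W = p * cyl_sum E S H W + (p' - p) * N"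
    unfolding N_def using f S H by (intro cyl_sum_fk_open) auto
  ultimately show "cyl_sum E (insert f S) (insert f H) W
      \<le> (p - (if f \<in> B then (p - p') * closed_cutset_prob (E - B) f else 0)) * cyl_sum E S H W"
    by (simp add: algebra_simps split: if_splits)
qed

lemma fk_partition_pos: "0 < (\<Sum>\<omega>\<in>Pow E. W \<omega>)"
  using fk_weight_pos finite_E by (intro sum_pos) auto

lemma prod_measure_stoch_dom_fk:
  assumes "open_prob_ge E B UNIV W r" "\<forall>e\<in>E. 0 \<le> r e \<and> r e \<le> 1"
  shows "stoch_dom E (prod_measure E r) (fk_measure V E ends \<alpha> p q)"
  unfolding stoch_dom_def fk_measure_def
proof (intro allI impI)
  fix A assume "increasing_event E A"
  then have "prod_measure E r A * (\<Sum>\<omega>\<in>Pow E. W \<omega>) \<le> (\<Sum>\<omega>\<in>A \<inter> Pow E. W \<omega>)"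
    using assms fk_weight_pos
    by (intro prod_measure_mult_le_sum[OF finite_E]) (auto simp: depends_only_on_def less_imp_le)
  then show "prod_measure E r A \<le> (\<Sum>\<omega>\<in>A \<inter> Pow E. W \<omega>) / (\<Sum>\<omega>\<in>Pow E. W \<omega>)"
    using fk_partition_pos by (simp add: pos_le_divide_eq)
qed

lemma fk_stoch_dom_prod_measure:
  assumes "open_prob_le E B UNIV W r" "\<forall>e\<in>E. 0 \<le> r e \<and> r e \<le> 1"
  shows "stoch_dom E (fk_measure V E ends \<alpha> p q) (prod_measure E r)"
  unfolding stoch_dom_def fk_measure_def
proof (intro allI impI)
  fix A assume "increasing_event E A"
  then have "(\<Sum>\<omega>\<in>A \<inter> Pow E. W \<omega>) \<le> prod_measure E r A * (\<Sum>\<omega>\<in>Pow E. W \<omega>)"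
    using assms fk_weight_pos
    by (intro sum_le_prod_measure_mult[OF finite_E]) (auto simp: depends_only_on_def less_imp_le)
  then show "(\<Sum>\<omega>\<in>A \<inter> Pow E. W \<omega>) / (\<Sum>\<omega>\<in>Pow E. W \<omega>) \<le> prod_measure E r A"
    using fk_partition_pos by (simp add: divide_le_eq)
qed

lemma prod_measure_stoch_dom_fk_cutset:
  assumes "p < p'"
  shows "stoch_dom E (prod_measure E (\<lambda>e. p + (if e \<in> B then \<bar>p' - p\<bar> * closed_cutset_prob (E - B) e else 0)))
    (fk_measure V E ends \<alpha> p q)"
proof (rule prod_measure_stoch_dom_fk)
  show "open_prob_ge E B UNIV W (\<lambda>e. p + (if e \<in> B then \<bar>p' - p\<bar> * closed_cutset_prob (E - B) e else 0))"
    using open_prob_ge_fk[OF assms, of B] assms by (simp only: abs_of_pos diff_gt_0_iff_gt)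
  have "0 \<le> (p' - p) * closed_cutset_prob (E - B) e" "(p' - p) * closed_cutset_prob (E - B) e \<le> p' - p" for e
    using assms closed_cutset_prob_bounds[of "E - B" e] by (simp_all add: mult_left_le)
  then show "\<forall>e\<in>E. 0 \<le> p + (if e \<in> B then \<bar>p' - p\<bar> * closed_cutset_prob (E - B) e else 0) \<and>
      p + (if e \<in> B then \<bar>p' - p\<bar> * closed_cutset_prob (E - B) e else 0) \<le> 1"
    using assms p_pos p_prime_bounds by (smt (verit))
qed

lemma fk_stoch_dom_prod_measure_cutset:
  assumes "p' < p"
  shows "stoch_dom E (fk_measure V E ends \<alpha> p q)
    (prod_measure E (\<lambda>e. p - (if e \<in> B then \<bar>p' - p\<bar> * closed_cutset_prob (E - B) e else 0)))"
proof (rule fk_stoch_dom_prod_measure)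
  show "open_prob_le E B UNIV W (\<lambda>e. p - (if e \<in> B then \<bar>p' - p\<bar> * closed_cutset_prob (E - B) e else 0))"
    using open_prob_le_fk[OF assms, of B] assms by (simp only: abs_minus_commute abs_of_pos diff_gt_0_iff_gt)
  have "0 \<le> (p - p') * closed_cutset_prob (E - B) e" "(p - p') * closed_cutset_prob (E - B) e \<le> p - p'" for e
    using assms closed_cutset_prob_bounds[of "E - B" e] by (simp_all add: mult_left_le)
  then show "\<forall>e\<in>E. 0 \<le> p - (if e \<in> B then \<bar>p' - p\<bar> * closed_cutset_prob (E - B) e else 0) \<and>
      p - (if e \<in> B then \<bar>p' - p\<bar> * closed_cutset_prob (E - B) e else 0) \<le> 1"
    using assms p_less_1 p_prime_bounds by (smt (verit))
qed

end

theorem proposition3p1: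
  fixes V :: "'v set" and E :: "'e set" and ends :: "'e \<Rightarrow> 'v \<times> 'v"
    and dG :: "'v set" and \<alpha> :: "'v set set" and p q :: real and Ehat :: "'e set"
  assumes "finite_graph V E ends" and "connected_graph V E ends"
    and "dG \<subseteq> V" and "partition_on dG \<alpha>"
    and "0 \<le> p" and "p \<le> 1" and "q > 0"
    and "Ehat \<subseteq> E"
    and "\<forall>e\<in>Ehat. \<exists>\<chi>. is_cutset V E ends \<alpha> e \<chi> \<and> \<chi> \<subseteq> E - Ehat"
  defines "eps \<equiv> \<lambda>e. \<bar>p_prime p q - p\<bar> *
      prod_measure E (\<lambda>_. max p (p_prime p q))
        {\<omega>. \<omega> \<subseteq> E \<and> (\<exists>\<chi>. is_cutset V E ends \<alpha> e \<chi> \<and> \<chi> \<subseteq> E - Ehat \<and> \<chi> \<inter> \<omega> = {})}"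
  shows "(p < p_prime p q \<longrightarrow>
           stoch_dom E (prod_measure E (\<lambda>e. p + (if e \<in> Ehat then eps e else 0)))
                       (fk_measure V E ends \<alpha> p q))
       \<and> (p > p_prime p q \<longrightarrow>
           stoch_dom E (fk_measure V E ends \<alpha> p q)
                       (prod_measure E (\<lambda>e. p - (if e \<in> Ehat then eps e else 0))))"
proof (cases "p = p_prime p q")
  case False
  then have "p \<noteq> 0" "p \<noteq> 1"
    by (auto simp: p_prime_def)
  moreover have "\<Union>\<alpha> \<subseteq> V"
    using assms(3,4) unfolding partition_on_def by auto
  ultimately interpret fk_model V E ends \<alpha> p q
    using assms by unfold_locales auto
  have "eps = (\<lambda>e. \<bar>p' - p\<bar> * closed_cutset_prob (E - Ehat) e)"
    unfolding eps_def closed_cutset_prob_def closed_cutset_def ..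
  then show ?thesis
    using prod_measure_stoch_dom_fk_cutset[of Ehat] fk_stoch_dom_prod_measure_cutset[of Ehat] by auto
qed simp

end
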